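(* Let $a_1,a_2,a_3,a_4,a_5$ and $\alpha_1,\alpha_2,\alpha_3,\alpha_4,\alpha_5$ be positive real numbers with $\sum_{i=1}^5\alpha_i=\pi$ and $a_1\le a_2\le a_3\le a_4\le a_5$. Then $$\sum_{i=1}^5 a_i\cos\alpha_i\;\le\;\frac{1+\sqrt5}{4}\cdot\frac{1}{a_1a_2a_3a_4a_5}\left(a_1^2a_5^2a_2^2+a_5^2a_2^2a_3^2+a_2^2a_3^2a_4^2+a_3^2a_4^2a_1^2+a_4^2a_1^2a_5^2\right).$$ *)

theory Defs
  imports Complex_Main
begin

end

theory Submission
  imports Defs
begin

text \<open>
  The quadratic form y1 y2 + y2 y3 + y3 y4 + y4 y5 - y5 y1 of the sign-twisted 5-cycle has
  largest eigenvalue cos (pi/5) = (1 + sqrt 5)/4. Put the partial sums t_k of the angles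
  (t_1 = 0) as arguments of plane vectors of lengths x_k: then x_k x_(k+1) cos b_k is the inner
  product of consecutive vectors, and because the angles add up to pi the last term closes the
  cycle with a sign flip. Applying the eigenvalue bound to both coordinates gives
  \<Sum> x_k x_(k+1) cos b_k \<le> (1 + sqrt 5)/4 \<Sum> x_k^2. The theorem follows by choosing the x_k
  so that the consecutive products x_k x_(k+1) are a1, a2, a4, a5, a3.
\<close>

lemma twisted_pentagon_form_le:
  fixes y1 y2 y3 y4 y5 :: real
  shows "y1*y2 + y2*y3 + y3*y4 + y4*y5 - y5*y1
     \<le> (1 + sqrt 5) / 4 * (y1^2 + y2^2 + y3^2 + y4^2 + y5^2)"
proof -
  define s where "s = sqrt (5::real)"
  have s_squared: "s^2 = 5" and s_ge_1: "s \<ge> 1"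
    unfolding s_def by (simp_all add: real_le_rsqrt)
  have sos: "(1 + s) / 4 * (y1^2 + y2^2 + y3^2 + y4^2 + y5^2)
       - (y1*y2 + y2*y3 + y3*y4 + y4*y5 - y5*y1)
     = ((1+s) * (2*y1 + (1-s)*y2 + (s-1)*y5)^2 + 2 * (2*y2 - 2*y3 + (s-1)*y5)^2
       + (s-1) * (2*y3 - (1+s)*y4 + 2*y5)^2) / 16"
  proof -
    have s_times_s: "s * (s * x) = 5 * x" for x
      using s_squared by (simp add: power2_eq_square)
    show ?thesis
      by (simp add: field_simps power2_eq_square s_times_s)
  qed
  have "0 \<le> (1+s) * (2*y1 + (1-s)*y2 + (s-1)*y5)^2 + 2 * (2*y2 - 2*y3 + (s-1)*y5)^2
       + (s-1) * (2*y3 - (1+s)*y4 + 2*y5)^2"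
    using s_ge_1 by (intro add_nonneg_nonneg mult_nonneg_nonneg) auto
  then have "0 \<le> (1 + s) / 4 * (y1^2 + y2^2 + y3^2 + y4^2 + y5^2)
       - (y1*y2 + y2*y3 + y3*y4 + y4*y5 - y5*y1)"
    unfolding sos by simp
  then show ?thesis
    unfolding s_def by (simp only: diff_ge_0_iff_ge)
qed

lemma mult_cos_diff:
  fixes x y s t :: real
  shows "x * y * cos (s - t) = (x * cos s) * (y * cos t) + (x * sin s) * (y * sin t)"
  by (simp add: cos_diff algebra_simps)

lemma norm_square_cos_sin:
  fixes x t :: real
  shows "x^2 = (x * cos t)^2 + (x * sin t)^2"
  by (simp add: power_mult_distrib flip: distrib_left)

lemma twisted_pentagon_cos_le:
  fixes x1 x2 x3 x4 x5 b1 b2 b3 b4 b5 :: real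
  assumes "b1 + b2 + b3 + b4 + b5 = pi"
  shows "x1*x2*cos b1 + x2*x3*cos b2 + x3*x4*cos b3 + x4*x5*cos b4 + x5*x1*cos b5
     \<le> (1 + sqrt 5) / 4 * (x1^2 + x2^2 + x3^2 + x4^2 + x5^2)"
proof -
  define t2 t3 t4 t5 where "t2 = b1" and "t3 = t2 + b2" and "t4 = t3 + b3" and "t5 = t4 + b4"
  have cos_b5: "cos b5 = - cos t5"
    using assms unfolding t2_def t3_def t4_def t5_def
    by (metis add_diff_cancel_left' cos_pi_minus add.assoc)
  have lhs: "x1*x2*cos b1 + x2*x3*cos b2 + x3*x4*cos b3 + x4*x5*cos b4 + x5*x1*cos b5
    = (x1 * (x2*cos t2) + x2*cos t2 * (x3*cos t3) + x3*cos t3 * (x4*cos t4)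
        + x4*cos t4 * (x5*cos t5) - x5*cos t5 * x1)
    + (0 * (x2*sin t2) + x2*sin t2 * (x3*sin t3) + x3*sin t3 * (x4*sin t4)
        + x4*sin t4 * (x5*sin t5) - x5*sin t5 * 0)"
    using mult_cos_diff[of x2 x3 t3 t2] mult_cos_diff[of x3 x4 t4 t3] mult_cos_diff[of x4 x5 t5 t4]
    unfolding cos_b5 t2_def t3_def t4_def t5_def by (simp add: algebra_simps)
  have rhs: "x1^2 + x2^2 + x3^2 + x4^2 + x5^2 =
     (x1^2 + (x2*cos t2)^2 + (x3*cos t3)^2 + (x4*cos t4)^2 + (x5*cos t5)^2)
     + (0^2 + (x2*sin t2)^2 + (x3*sin t3)^2 + (x4*sin t4)^2 + (x5*sin t5)^2)"
    using norm_square_cos_sin[of x2 t2] norm_square_cos_sin[of x3 t3]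
      norm_square_cos_sin[of x4 t4] norm_square_cos_sin[of x5 t5] by simp
  show ?thesis
    unfolding lhs rhs
    by (rule order_trans[OF add_mono[OF twisted_pentagon_form_le twisted_pentagon_form_le]])
      (simp add: distrib_left)
qed

lemma sqrt_mult_eq_of_square:
  fixes u v c :: real
  assumes "u * v = c^2" and "c > 0"
  shows "sqrt u * sqrt v = c"
  using assms by (metis real_sqrt_mult real_sqrt_abs abs_of_pos)

lemma twisted_pentagon_cos_sum_le:
  fixes c1 c2 c3 c4 c5 b1 b2 b3 b4 b5 :: real
  assumes "c1 > 0" "c2 > 0" "c3 > 0" "c4 > 0" "c5 > 0"
    and "b1 + b2 + b3 + b4 + b5 = pi"
  shows "c1 * cos b1 + c2 * cos b2 + c3 * cos b3 + c4 * cos b4 + c5 * cos b5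
    \<le> (1 + sqrt 5) / 4 * (c5*c1*c3 / (c2*c4) + c1*c2*c4 / (c3*c5) + c2*c3*c5 / (c4*c1)
         + c3*c4*c1 / (c5*c2) + c4*c5*c2 / (c1*c3))"
proof -
  define u1 u2 u3 u4 u5 where "u1 = c5*c1*c3 / (c2*c4)" and "u2 = c1*c2*c4 / (c3*c5)"
    and "u3 = c2*c3*c5 / (c4*c1)" and "u4 = c3*c4*c1 / (c5*c2)" and "u5 = c4*c5*c2 / (c1*c3)"
  have "u1 > 0" "u2 > 0" "u3 > 0" "u4 > 0" "u5 > 0"
    unfolding u1_def u2_def u3_def u4_def u5_def using assms by simp_all
  then have squares: "(sqrt u1)^2 + (sqrt u2)^2 + (sqrt u3)^2 + (sqrt u4)^2 + (sqrt u5)^2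
      = u1 + u2 + u3 + u4 + u5"
    by simp
  have "u1 * u2 = c1^2" "u2 * u3 = c2^2" "u3 * u4 = c3^2" "u4 * u5 = c4^2" "u5 * u1 = c5^2"
    unfolding u1_def u2_def u3_def u4_def u5_def using assms
    by (simp_all add: field_simps power2_eq_square)
  with assms have products: "sqrt u1 * sqrt u2 = c1" "sqrt u2 * sqrt u3 = c2"
      "sqrt u3 * sqrt u4 = c3" "sqrt u4 * sqrt u5 = c4" "sqrt u5 * sqrt u1 = c5"
    by (simp_all add: sqrt_mult_eq_of_square)
  from twisted_pentagon_cos_le[OF assms(6), of "sqrt u1" "sqrt u2" "sqrt u3" "sqrt u4" "sqrt u5"]
  show ?thesis
    unfolding products squares by (simp only: u1_def u2_def u3_def u4_def u5_def)
qed

theorem theorem1: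
  fixes a1 a2 a3 a4 a5 \<alpha>1 \<alpha>2 \<alpha>3 \<alpha>4 \<alpha>5 :: real
  assumes "a1 > 0" "a2 > 0" "a3 > 0" "a4 > 0" "a5 > 0"
    and "\<alpha>1 > 0" "\<alpha>2 > 0" "\<alpha>3 > 0" "\<alpha>4 > 0" "\<alpha>5 > 0"
    and "\<alpha>1 + \<alpha>2 + \<alpha>3 + \<alpha>4 + \<alpha>5 = pi"
    and "a1 \<le> a2" "a2 \<le> a3" "a3 \<le> a4" "a4 \<le> a5"
  shows "a1 * cos \<alpha>1 + a2 * cos \<alpha>2 + a3 * cos \<alpha>3 + a4 * cos \<alpha>4 + a5 * cos \<alpha>5
    \<le> (1 + sqrt 5) / 4 * (1 / (a1 * a2 * a3 * a4 * a5)) *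
       (a1^2 * a5^2 * a2^2 + a5^2 * a2^2 * a3^2 + a2^2 * a3^2 * a4^2
        + a3^2 * a4^2 * a1^2 + a4^2 * a1^2 * a5^2)"
proof -
  have "\<alpha>1 + \<alpha>2 + \<alpha>4 + \<alpha>5 + \<alpha>3 = pi"
    using assms(11) by linarith
  from twisted_pentagon_cos_sum_le[OF assms(1,2,4,5,3) this]
  have "a1 * cos \<alpha>1 + a2 * cos \<alpha>2 + a4 * cos \<alpha>4 + a5 * cos \<alpha>5 + a3 * cos \<alpha>3
    \<le> (1 + sqrt 5) / 4 * (a3*a1*a4 / (a2*a5) + a1*a2*a5 / (a4*a3) + a2*a4*a3 / (a5*a1)
         + a4*a5*a1 / (a3*a2) + a5*a3*a2 / (a1*a4))" .
  also have "a3*a1*a4 / (a2*a5) + a1*a2*a5 / (a4*a3) + a2*a4*a3 / (a5*a1)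
         + a4*a5*a1 / (a3*a2) + a5*a3*a2 / (a1*a4)
      = 1 / (a1 * a2 * a3 * a4 * a5) *
       (a1^2 * a5^2 * a2^2 + a5^2 * a2^2 * a3^2 + a2^2 * a3^2 * a4^2
        + a3^2 * a4^2 * a1^2 + a4^2 * a1^2 * a5^2)"
    using assms(1-5) by (simp add: field_simps power2_eq_square)
  finally show ?thesis
    by (simp add: algebra_simps)
qed

end
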